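(* Under the sampling setup described in the context, the following hold: (a) If $i_u=\lceil ks/n-g\rceil$, then $\mathrm{P}[x_k^*<u]\le e^{-2g^2/s}$. (b) $\mathrm{P}[u<x_{k_l}^*]\le e^{-2g^2/s}$. (c) If $i_v=\lceil ks/n+g\rceil$, then $\mathrm{P}[v<x_k^*]\le e^{-2g^2/s}$. (d) $\mathrm{P}[x_{k_r}^*<v]\le e^{-2g^2/s}$. (e) $i_u\ne\lceil ks/n-g\rceil$ if and only if $k\le gn/s$; and $i_v\ne\lceil ks/n+g\rceil$ if and only if $n<k+gn/s$.
   Context: Sampling setup. Let $X=(x_1,\dots,x_n)$ be a list of $n\ge 2$ elements of a totally ordered set; repeated values are allowed. Let $x_1^*\le\dots\le x_n^*$ be these elements in sorted order. Let $k$ be an integer with $1\le k\le n$, let $s$ be an integer with $1\le s\le n-1$, and let $g>0$ be real. A sample is drawn by choosing a set $I\subset\{1,\dots,n\}$ of $s$ positions uniformly at random among all $s$-element subsets. The sample $S$ is the list $(x_j)_{j\in I}$, and its sorted elements are $y_1^*\le\dots\le y_s^*$. Define - $i_u:=\max\{\lceil ks/n-g\rceil,1\}$ and $i_v:=\min\{\lceil ks/n+g\rceil,s\}$; - $u:=y_{i_u}^*$ and $v:=y_{i_v}^*$; - $k_l:=\max\{\lceil k-2gn/s\rceil,1\}$ and $k_r:=\min\{\lceil k+2gn/s\rceil,n\}$. $\mathrm{P}$ denotes probability with respect to the random choice of $I$. *)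

theory Defs
  imports "HOL-Probability.Probability"
begin

text \<open>Positions are 0-based indices into the list X (so {..<n}); order statistics
  are 1-based: ostat xs i is the i-th smallest element of xs (with repetitions).\<close>

definition ostat :: "'a::linorder list \<Rightarrow> nat \<Rightarrow> 'a" where
  "ostat xs i = sort xs ! (i - 1)"

definition sample_space :: "nat \<Rightarrow> nat \<Rightarrow> nat set set" where
  "sample_space n s = {I. I \<subseteq> {..<n} \<and> card I = s}"

definition sample :: "'a list \<Rightarrow> nat set \<Rightarrow> 'a list" where
  "sample X I = map (\<lambda>j. X ! j) (sorted_list_of_set I)"

definition i_u :: "nat \<Rightarrow> nat \<Rightarrow> nat \<Rightarrow> real \<Rightarrow> int" where
  "i_u n k s g = max (\<lceil>real k * real s / real n - g\<rceil>) 1"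

definition i_v :: "nat \<Rightarrow> nat \<Rightarrow> nat \<Rightarrow> real \<Rightarrow> int" where
  "i_v n k s g = min (\<lceil>real k * real s / real n + g\<rceil>) (int s)"

definition k_l :: "nat \<Rightarrow> nat \<Rightarrow> nat \<Rightarrow> real \<Rightarrow> int" where
  "k_l n k s g = max (\<lceil>real k - 2 * g * real n / real s\<rceil>) 1"

definition k_r :: "nat \<Rightarrow> nat \<Rightarrow> nat \<Rightarrow> real \<Rightarrow> int" where
  "k_r n k s g = min (\<lceil>real k + 2 * g * real n / real s\<rceil>) (int n)"

end

theory Submission
  imports Defs
begin

text \<open>
  Each event of the statement compares an order statistic of the sample with one of X, and such a
  comparison is decided by the number |I \<inter> A| of sampled positions in a fixed set A of
  positions of X (those holding values below a threshold). Counting the j-subsets of A inside the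
  sample gives E[(1 + y)^|I \<inter> A|] = \<Sum>j. C(s,j) C(|A|,j) / C(n,j) y^j, and
  C(|A|,j) / C(n,j) \<le> (|A| / n)^j bounds this by the binomial value (1 + y |A| / n)^s. So
  Hoeffding's argument applies to the hypergeometric count |I \<inter> A| and bounds the probability
  of a deviation g from its mean s |A| / n by exp (-2 g^2 / s). The indices i_u, i_v, k_l and k_r
  are chosen so that each of the four events forces such a deviation.
\<close>

section \<open>Tail bounds for sampling without replacement\<close>

lemma binomial_ratio_le_power:
  assumes "m \<le> n"
  shows "real (m choose j) / real (n choose j) \<le> (real m / real n) ^ j"
proof (cases "j \<le> m")
  case False
  then show ?thesis by (simp add: binomial_eq_0)
next
  case True
  have fact_binomial: "fact j * real (a choose j) = (\<Prod>i<j. real a - real i)" for a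
    using gbinomial_mult_fact[of j "real a"] by (simp add: binomial_gbinomial atLeast0LessThan)
  have "fact j * (real (m choose j) * real n ^ j) = (\<Prod>i<j. (real m - real i) * real n)"
    by (simp add: fact_binomial prod.distrib mult.assoc)
  also have "\<dots> \<le> (\<Prod>i<j. (real n - real i) * real m)"
    using True assms by (intro prod_mono) (auto simp: algebra_simps mult_left_mono)
  also have "\<dots> = fact j * (real (n choose j) * real m ^ j)"
    by (simp add: fact_binomial prod.distrib mult.assoc)
  finally have "real (m choose j) * real n ^ j \<le> real (n choose j) * real m ^ j"
    by simp
  moreover have "n choose j > 0" "real n ^ j > 0"
    using True assms by auto
  ultimately show ?thesis
    by (simp add: power_divide divide_simps mult.commute)
qed

lemma sum_Pow_card:
  assumes "finite A"
  shows "(\<Sum>J\<in>Pow A. f (card J)) = (\<Sum>j\<le>card A. of_nat (card A choose j) * f j)"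
proof -
  have "(\<Sum>J\<in>Pow A. f (card J)) = (\<Sum>j\<le>card A. \<Sum>J\<in>{J\<in>Pow A. card J = j}. f (card J))"
    using assms by (intro sum.group[symmetric]) (auto simp: card_mono)
  also have "\<dots> = (\<Sum>j\<le>card A. of_nat (card A choose j) * f j)"
  proof (intro sum.cong refl)
    fix j
    have "{J\<in>Pow A. card J = j} = {J. J \<subseteq> A \<and> card J = j}" by auto
    then show "(\<Sum>J\<in>{J\<in>Pow A. card J = j}. f (card J)) = of_nat (card A choose j) * f j"
      using n_subsets[OF assms] by simp
  qed
  finally show ?thesis .
qed

lemma sum_power_card_Int_eq:
  fixes y :: "'b::comm_semiring_1"
  assumes "finite \<F>" "finite A"
  shows "(\<Sum>I\<in>\<F>. (1 + y) ^ card (I \<inter> A)) = (\<Sum>J\<in>Pow A. of_nat (card {I\<in>\<F>. J \<subseteq> I}) * y ^ card J)"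
proof -
  have "(\<Sum>I\<in>\<F>. (1 + y) ^ card (I \<inter> A)) = (\<Sum>I\<in>\<F>. \<Sum>J\<in>{J\<in>Pow A. J \<subseteq> I}. y ^ card J)"
  proof (intro sum.cong refl)
    fix I
    have "(1 + y) ^ card (I \<inter> A) = (\<Sum>J\<in>Pow (I \<inter> A). y ^ card J)"
      using binomial_ring[of y 1] sum_Pow_card[of "I \<inter> A" "\<lambda>j. y ^ j"] assms(2)
      by (simp add: add.commute)
    also have "Pow (I \<inter> A) = {J\<in>Pow A. J \<subseteq> I}" by auto
    finally show "(1 + y) ^ card (I \<inter> A) = (\<Sum>J\<in>{J\<in>Pow A. J \<subseteq> I}. y ^ card J)" .
  qed
  also have "\<dots> = (\<Sum>J\<in>Pow A. \<Sum>I\<in>{I\<in>\<F>. J \<subseteq> I}. y ^ card J)"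
    using assms by (intro sum.swap_restrict) auto
  finally show ?thesis by simp
qed

lemma finite_sample_space: "finite (sample_space n s)"
  unfolding sample_space_def by (rule finite_subset[of _ "Pow {..<n}"]) auto

lemma card_sample_space: "card (sample_space n s) = n choose s"
  unfolding sample_space_def using n_subsets[of "{..<n}" s] by simp

lemma sample_space_nonempty: "s \<le> n \<Longrightarrow> sample_space n s \<noteq> {}"
  using card_sample_space[of n s] by auto

lemma card_supersets_in_sample_space:
  assumes "J \<subseteq> {..<n}" "s \<le> n"
  shows "card {I\<in>sample_space n s. J \<subseteq> I} * (n choose card J) = (n choose s) * (s choose card J)"
proof (cases "card J \<le> s")
  case True
  have "finite J"
    using assms(1) finite_subset by blast
  have "{I\<in>sample_space n s. J \<subseteq> I} = (\<lambda>K. K \<union> J) ` {K. K \<subseteq> {..<n} - J \<and> card K = s - card J}"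
  proof (intro set_eqI iffI)
    fix I
    assume I: "I \<in> {I\<in>sample_space n s. J \<subseteq> I}"
    then have "card (I - J) = s - card J"
      using \<open>finite J\<close> by (simp add: sample_space_def card_Diff_subset)
    then show "I \<in> (\<lambda>K. K \<union> J) ` {K. K \<subseteq> {..<n} - J \<and> card K = s - card J}"
      using I by (intro image_eqI[of _ _ "I - J"]) (auto simp: sample_space_def)
  next
    fix I
    assume "I \<in> (\<lambda>K. K \<union> J) ` {K. K \<subseteq> {..<n} - J \<and> card K = s - card J}"
    then obtain K where K: "K \<subseteq> {..<n} - J" "card K = s - card J" "I = K \<union> J"
      by auto
    have "K \<inter> J = {}"
      using K(1) by blast
    then have "card I = s"
      using K \<open>finite J\<close> True finite_subset[OF K(1)] by (simp add: card_Un_disjoint)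
    then show "I \<in> {I\<in>sample_space n s. J \<subseteq> I}"
      using K assms(1) by (auto simp: sample_space_def)
  qed
  also have "card \<dots> = card {K. K \<subseteq> {..<n} - J \<and> card K = s - card J}"
    by (intro card_image inj_onI) blast
  also have "\<dots> = (n - card J) choose (s - card J)"
    using n_subsets[of "{..<n} - J"] assms(1) \<open>finite J\<close> by (simp add: card_Diff_subset)
  finally show ?thesis
    using choose_mult[OF True assms(2)] by (simp add: mult.commute)
next
  case False
  have "{I\<in>sample_space n s. J \<subseteq> I} = {}"
    using False card_mono[of _ J] finite_subset[of _ "{..<n}"] by (fastforce simp: sample_space_def)
  then show ?thesis
    using False by (simp only: card.empty) (simp add: binomial_eq_0)
qed

lemma sum_power_card_Int_sample_space:
  fixes y :: real
  assumes A: "A \<subseteq> {..<n}" and "s \<le> n"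
  shows "(\<Sum>I\<in>sample_space n s. (1 + y) ^ card (I \<inter> A))
           = real (n choose s) * (\<Sum>j\<le>card A. real (card A choose j) * (real (s choose j) / real (n choose j) * y ^ j))"
proof -
  have "finite A"
    using A finite_subset by blast
  have "(\<Sum>I\<in>sample_space n s. (1 + y) ^ card (I \<inter> A))
      = (\<Sum>J\<in>Pow A. real (card {I\<in>sample_space n s. J \<subseteq> I}) * y ^ card J)"
    using \<open>finite A\<close> by (intro sum_power_card_Int_eq finite_sample_space)
  also have "\<dots> = (\<Sum>J\<in>Pow A. real (n choose s) * (real (s choose card J) / real (n choose card J) * y ^ card J))"
  proof (intro sum.cong refl)
    fix J
    assume "J \<in> Pow A"
    then have "J \<subseteq> {..<n}" "card J \<le> n"
      using A card_mono[of "{..<n}" J] by auto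
    then have "real (card {I\<in>sample_space n s. J \<subseteq> I})
        = real (n choose s) * real (s choose card J) / real (n choose card J)"
      using card_supersets_in_sample_space[of J n s] \<open>s \<le> n\<close>
      by (simp add: eq_divide_eq flip: of_nat_mult)
    then show "real (card {I\<in>sample_space n s. J \<subseteq> I}) * y ^ card J
        = real (n choose s) * (real (s choose card J) / real (n choose card J) * y ^ card J)"
      by simp
  qed
  also have "\<dots> = real (n choose s) * (\<Sum>j\<le>card A. real (card A choose j) * (real (s choose j) / real (n choose j) * y ^ j))"
    unfolding sum_Pow_card[OF \<open>finite A\<close>, symmetric] by (simp add: sum_distrib_left)
  finally show ?thesis .
qed

abbreviation sampling :: "nat \<Rightarrow> nat \<Rightarrow> nat set pmf" where
  "sampling n s \<equiv> pmf_of_set (sample_space n s)"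

lemma expectation_power_card_Int_le:
  fixes y :: real
  assumes A: "A \<subseteq> {..<n}" and "s \<le> n" "y \<ge> 0"
  shows "measure_pmf.expectation (sampling n s) (\<lambda>I. (1 + y) ^ card (I \<inter> A))
           \<le> (1 + real (card A) / real n * y) ^ s"
proof -
  define m where "m = card A"
  define p where "p = real m / real n"
  have "m \<le> n"
    unfolding m_def using card_mono[OF _ A] by simp
  have "measure_pmf.expectation (sampling n s) (\<lambda>I. (1 + y) ^ card (I \<inter> A))
      = (\<Sum>j\<le>m. real (m choose j) * (real (s choose j) / real (n choose j) * y ^ j))"
    using \<open>s \<le> n\<close> sample_space_nonempty[of s n]
    by (simp add: integral_pmf_of_set finite_sample_space card_sample_space
        sum_power_card_Int_sample_space[OF A] m_def)
  also have "\<dots> \<le> (\<Sum>j\<le>m. real (s choose j) * (p * y) ^ j)"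
  proof (intro sum_mono)
    fix j
    have "real (m choose j) / real (n choose j) * (real (s choose j) * y ^ j) \<le> p ^ j * (real (s choose j) * y ^ j)"
      unfolding p_def using \<open>m \<le> n\<close> \<open>y \<ge> 0\<close> by (intro mult_right_mono binomial_ratio_le_power) auto
    then show "real (m choose j) * (real (s choose j) / real (n choose j) * y ^ j) \<le> real (s choose j) * (p * y) ^ j"
      by (simp add: power_mult_distrib field_simps)
  qed
  also have "\<dots> \<le> (\<Sum>j\<le>m + s. real (s choose j) * (p * y) ^ j)"
    unfolding p_def using \<open>y \<ge> 0\<close> by (intro sum_mono2) auto
  also have "\<dots> = (\<Sum>j\<le>s. real (s choose j) * (p * y) ^ j)"
    by (intro sum.mono_neutral_right) (auto simp: binomial_eq_0)
  also have "\<dots> = (1 + p * y) ^ s"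
    using binomial_ring[of "p * y" 1 s] by (simp add: add.commute)
  finally show ?thesis
    unfolding p_def m_def by (simp add: mult.commute)
qed

lemma prob_sampling_mono:
  assumes "s \<le> n" "\<And>I. I \<in> sample_space n s \<Longrightarrow> I \<in> E \<Longrightarrow> I \<in> F"
  shows "measure_pmf.prob (sampling n s) E \<le> measure_pmf.prob (sampling n s) F"
  using assms by (intro measure_pmf.finite_measure_mono_AE AE_pmfI)
    (auto simp: finite_sample_space sample_space_nonempty)

lemma Hoeffding_exponent_le:
  fixes p g t :: real
  assumes "p \<ge> 0" "0 < s" "g > 0" and t: "real s * p + g \<le> t"
  defines "h \<equiv> 4 * g / real s"
  shows "exp (- h * t) * (1 + p * (exp h - 1)) ^ s \<le> exp (- 2 * g\<^sup>2 / real s)"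
proof -
  define L where "L = ln (1 + p * (exp h - 1))"
  have "h > 0"
    using assms unfolding h_def by auto
  have "1 + p * (exp h - 1) > 0"
    using \<open>h > 0\<close> \<open>p \<ge> 0\<close> by (intro add_pos_nonneg mult_nonneg_nonneg) auto
  then have "(1 + p * (exp h - 1)) ^ s = exp (real s * L)"
    unfolding L_def by (simp add: exp_of_nat_mult)
  have "- h * p + L \<le> h\<^sup>2 / 8"
    unfolding L_def using \<open>h > 0\<close> \<open>p \<ge> 0\<close> by (intro Hoeffdings_lemma_aux) auto
  then have "real s * L \<le> real s * (h * p + h\<^sup>2 / 8)"
    by (intro mult_left_mono) auto
  moreover have "h * (real s * p + g) \<le> h * t"
    using t \<open>h > 0\<close> by (intro mult_left_mono) auto
  ultimately have "real s * L - h * t \<le> real s * (h * p + h\<^sup>2 / 8) - h * (real s * p + g)"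
    by linarith
  also have "\<dots> = - 2 * g\<^sup>2 / real s"
    unfolding h_def using \<open>0 < s\<close> by (simp add: field_simps power2_eq_square)
  finally show ?thesis
    using \<open>(1 + p * (exp h - 1)) ^ s = exp (real s * L)\<close> by (simp flip: exp_add)
qed

lemma prob_card_Int_upper_tail:
  assumes A: "A \<subseteq> {..<n}" and s: "0 < s" "s \<le> n" and "g > 0"
    and t: "real s * real (card A) / real n + g \<le> t"
  shows "measure_pmf.prob (sampling n s) {I. t \<le> real (card (I \<inter> A))} \<le> exp (- 2 * g\<^sup>2 / real s)"
proof -
  define h where "h = 4 * g / real s"
  define p where "p = real (card A) / real n"
  have "h > 0"
    using \<open>g > 0\<close> s unfolding h_def by auto
  have integrable: "integrable (sampling n s) f" for f :: "nat set \<Rightarrow> real"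
    using s by (intro integrable_measure_pmf_finite) (simp add: finite_sample_space sample_space_nonempty)
  have "measure_pmf.prob (sampling n s) {I. t \<le> real (card (I \<inter> A))}
      \<le> exp (- h * t) * measure_pmf.expectation (sampling n s) (\<lambda>I. exp (h * real (card (I \<inter> A))))"
    using measure_pmf.Chernoff_ineq_ge[OF \<open>h > 0\<close>, of "sampling n s" UNIV "\<lambda>I. real (card (I \<inter> A))" t]
    by (simp add: set_integrable_def set_lebesgue_integral_def integrable)
  also have "measure_pmf.expectation (sampling n s) (\<lambda>I. exp (h * real (card (I \<inter> A))))
      = measure_pmf.expectation (sampling n s) (\<lambda>I. (1 + (exp h - 1)) ^ card (I \<inter> A))"
    by (simp add: exp_of_nat_mult[symmetric] mult.commute)
  also have "\<dots> \<le> (1 + p * (exp h - 1)) ^ s"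
    unfolding p_def using \<open>h > 0\<close> s by (intro expectation_power_card_Int_le A) auto
  also have "exp (- h * t) * (1 + p * (exp h - 1)) ^ s \<le> exp (- 2 * g\<^sup>2 / real s)"
    unfolding h_def using s \<open>g > 0\<close> t by (intro Hoeffding_exponent_le) (auto simp: p_def)
  finally show ?thesis
    by simp
qed

lemma prob_card_Int_lower_tail:
  assumes A: "A \<subseteq> {..<n}" and s: "0 < s" "s \<le> n" and "g > 0"
    and t: "t \<le> real s * real (card A) / real n - g"
  shows "measure_pmf.prob (sampling n s) {I. real (card (I \<inter> A)) \<le> t} \<le> exp (- 2 * g\<^sup>2 / real s)"
proof -
  define A' where "A' = {..<n} - A"
  have "finite A"
    using A finite_subset by blast
  have card_Int_complement: "card (I \<inter> A') = s - card (I \<inter> A)" if "I \<in> sample_space n s" for I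
  proof -
    have "I \<inter> A' = I - I \<inter> A" "finite I" "card I = s"
      using that finite_subset[of I "{..<n}"] unfolding A'_def sample_space_def by auto
    then show ?thesis
      by (simp add: card_Diff_subset)
  qed
  have "measure_pmf.prob (sampling n s) {I. real (card (I \<inter> A)) \<le> t}
      \<le> measure_pmf.prob (sampling n s) {I. real s - t \<le> real (card (I \<inter> A'))}"
  proof (rule prob_sampling_mono[OF \<open>s \<le> n\<close>])
    fix I
    assume I: "I \<in> sample_space n s"
    then have "card (I \<inter> A) \<le> s"
      using finite_subset[of I "{..<n}"] card_mono[of I "I \<inter> A"] by (auto simp: sample_space_def)
    then show "I \<in> {I. real (card (I \<inter> A)) \<le> t} \<Longrightarrow> I \<in> {I. real s - t \<le> real (card (I \<inter> A'))}"
      using card_Int_complement[OF I] by auto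
  qed
  also have "\<dots> \<le> exp (- 2 * g\<^sup>2 / real s)"
  proof (rule prob_card_Int_upper_tail[OF _ s \<open>g > 0\<close>])
    have "card A' = n - card A" "card A \<le> n"
      unfolding A'_def using A \<open>finite A\<close> card_mono[OF _ A] by (auto simp: card_Diff_subset)
    then have "real s * real (card A') / real n = real s - real s * real (card A) / real n"
      using s by (simp add: field_simps)
    then show "real s * real (card A') / real n + g \<le> real s - t"
      using t by simp
  qed (simp add: A'_def)
  finally show ?thesis .
qed

section \<open>Order statistics of a sample\<close>

lemma sorted_nth_iff_less_length_filter:
  assumes "sorted ys" "i < length ys" and down: "\<And>x y. x \<le> y \<Longrightarrow> P y \<Longrightarrow> P x"
  shows "P (ys ! i) \<longleftrightarrow> i < length (filter P ys)"
  using assms(1,2)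
proof (induction ys arbitrary: i)
  case Nil
  then show ?case by simp
next
  case (Cons y ys)
  have rest_fails: "\<not> P z" if "\<not> P y" "z \<in> set ys" for z
    using Cons.prems(1) that down by auto
  show ?case
  proof (cases i)
    case 0
    then show ?thesis
      using rest_fails by (auto simp: filter_empty_conv)
  next
    case (Suc i')
    then have "P (ys ! i') \<longleftrightarrow> i' < length (filter P ys)"
      using Cons by auto
    moreover have "\<not> P (ys ! i')" if "\<not> P y"
      using rest_fails[OF that] Cons.prems(2) Suc by simp
    ultimately show ?thesis
      using Suc rest_fails by (auto simp: filter_empty_conv)
  qed
qed

lemma ostat_iff_le_length_filter:
  assumes "1 \<le> i" "i \<le> length xs" "\<And>x y. x \<le> y \<Longrightarrow> P y \<Longrightarrow> P x"
  shows "P (ostat xs i) \<longleftrightarrow> i \<le> length (filter P xs)"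
proof -
  have "P (ostat xs i) \<longleftrightarrow> i - 1 < length (filter P (sort xs))"
    unfolding ostat_def using assms by (intro sorted_nth_iff_less_length_filter) auto
  also have "length (filter P (sort xs)) = length (filter P xs)"
    by (metis mset_filter mset_sort size_mset)
  finally show ?thesis
    using assms(1) by linarith
qed

lemma ostat_in_set: "1 \<le> i \<Longrightarrow> i \<le> length xs \<Longrightarrow> ostat xs i \<in> set xs"
  unfolding ostat_def using nth_mem[of "i - 1" "sort xs"] by simp

lemma ostat_1_le:
  assumes "x \<in> set xs"
  shows "ostat xs 1 \<le> x"
proof -
  have "0 < length (filter (\<lambda>y. y \<le> x) xs)" "0 < length xs"
    using assms by (auto simp: filter_empty_conv)
  then show ?thesis
    using ostat_iff_le_length_filter[of 1 xs "\<lambda>y. y \<le> x"] by (simp add: Suc_le_eq)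
qed

lemma le_ostat_length:
  assumes "x \<in> set xs"
  shows "x \<le> ostat xs (length xs)"
proof -
  have "length (filter (\<lambda>y. y < x) xs) < length xs" "0 < length xs"
    using assms length_filter_less[of x xs] by auto
  then show ?thesis
    using ostat_iff_le_length_filter[of "length xs" xs "\<lambda>y. y < x"] by (simp add: Suc_le_eq not_less)
qed

lemma set_sample:
  assumes "I \<subseteq> {..<length X}"
  shows "set (sample X I) \<subseteq> set X"
  using assms finite_subset[OF assms] unfolding sample_def by auto

lemma ostat_sample_iff:
  assumes I: "I \<in> sample_space (length X) s" and "1 \<le> i" "i \<le> s"
    and "\<And>x y. x \<le> y \<Longrightarrow> P y \<Longrightarrow> P x"
  shows "P (ostat (sample X I) i) \<longleftrightarrow> i \<le> card (I \<inter> {j. j < length X \<and> P (X ! j)})"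
proof -
  have "I \<subseteq> {..<length X}" "card I = s" "finite I"
    using I finite_subset[of I "{..<length X}"] unfolding sample_space_def by auto
  then have "length (sample X I) = s"
    unfolding sample_def by simp
  then have "P (ostat (sample X I) i) \<longleftrightarrow> i \<le> length (filter P (sample X I))"
    using assms by (intro ostat_iff_le_length_filter) auto
  also have "length (filter P (sample X I)) = card {j\<in>I. P (X ! j)}"
    unfolding sample_def filter_map length_map using \<open>finite I\<close>
    by (subst distinct_length_filter) (auto simp: o_def Int_def conj_commute)
  also have "{j\<in>I. P (X ! j)} = I \<inter> {j. j < length X \<and> P (X ! j)}"
    using \<open>I \<subseteq> {..<length X}\<close> by auto
  finally show ?thesis .
qed

lemma ostat_sample_in_set:
  assumes "I \<in> sample_space (length X) s" "1 \<le> i" "i \<le> s"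
  shows "ostat (sample X I) i \<in> set X"
proof -
  have "I \<subseteq> {..<length X}" "length (sample X I) = s"
    using assms(1) finite_subset[of I "{..<length X}"] unfolding sample_space_def sample_def by auto
  then show ?thesis
    using set_sample ostat_in_set[of i "sample X I"] assms(2,3) by auto
qed

lemma prob_ostat_less_ostat_sample:
  fixes X :: "'a::linorder list"
  assumes "1 \<le> k" "k \<le> length X" "1 \<le> i" "i \<le> s" "s \<le> length X" "g > 0"
    and dev: "real i - 1 \<le> real s * real k / real (length X) - g"
  shows "measure_pmf.prob (sampling (length X) s) {I. ostat X k < ostat (sample X I) i}
           \<le> exp (- 2 * g\<^sup>2 / real s)"
proof -
  define A where "A = {j. j < length X \<and> X ! j \<le> ostat X k}"
  have "k \<le> card A"
    using ostat_iff_le_length_filter[of k X "\<lambda>y. y \<le> ostat X k"] assms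
    unfolding A_def by (simp add: length_filter_conv_card)
  have "measure_pmf.prob (sampling (length X) s) {I. ostat X k < ostat (sample X I) i}
      \<le> measure_pmf.prob (sampling (length X) s) {I. real (card (I \<inter> A)) \<le> real i - 1}"
  proof (rule prob_sampling_mono[OF \<open>s \<le> length X\<close>])
    fix I
    assume "I \<in> sample_space (length X) s"
    then have "ostat (sample X I) i \<le> ostat X k \<longleftrightarrow> i \<le> card (I \<inter> A)"
      unfolding A_def using assms by (intro ostat_sample_iff) auto
    then show "I \<in> {I. ostat X k < ostat (sample X I) i} \<Longrightarrow> I \<in> {I. real (card (I \<inter> A)) \<le> real i - 1}"
      by auto
  qed
  also have "\<dots> \<le> exp (- 2 * g\<^sup>2 / real s)"
  proof (rule prob_card_Int_lower_tail)
    have "real s * real k / real (length X) \<le> real s * real (card A) / real (length X)"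
      using \<open>k \<le> card A\<close> by (intro divide_right_mono mult_left_mono) auto
    then show "real i - 1 \<le> real s * real (card A) / real (length X) - g"
      using dev by linarith
  qed (use assms in \<open>auto simp: A_def\<close>)
  finally show ?thesis .
qed

lemma prob_ostat_sample_less_ostat:
  fixes X :: "'a::linorder list"
  assumes "1 \<le> k" "k \<le> length X" "1 \<le> i" "i \<le> s" "s \<le> length X" "g > 0"
    and dev: "real s * (real k - 1) / real (length X) + g \<le> real i"
  shows "measure_pmf.prob (sampling (length X) s) {I. ostat (sample X I) i < ostat X k}
           \<le> exp (- 2 * g\<^sup>2 / real s)"
proof -
  define B where "B = {j. j < length X \<and> X ! j < ostat X k}"
  have "card B < k"
    using ostat_iff_le_length_filter[of k X "\<lambda>y. y < ostat X k"] assms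
    unfolding B_def by (force simp: length_filter_conv_card)
  have "measure_pmf.prob (sampling (length X) s) {I. ostat (sample X I) i < ostat X k}
      \<le> measure_pmf.prob (sampling (length X) s) {I. real i \<le> real (card (I \<inter> B))}"
  proof (rule prob_sampling_mono[OF \<open>s \<le> length X\<close>])
    fix I
    assume "I \<in> sample_space (length X) s"
    then have "ostat (sample X I) i < ostat X k \<longleftrightarrow> i \<le> card (I \<inter> B)"
      unfolding B_def using assms by (intro ostat_sample_iff) auto
    then show "I \<in> {I. ostat (sample X I) i < ostat X k} \<Longrightarrow> I \<in> {I. real i \<le> real (card (I \<inter> B))}"
      by auto
  qed
  also have "\<dots> \<le> exp (- 2 * g\<^sup>2 / real s)"
  proof (rule prob_card_Int_upper_tail)
    have "real s * real (card B) / real (length X) \<le> real s * (real k - 1) / real (length X)"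
      using \<open>card B < k\<close> by (intro divide_right_mono mult_left_mono) auto
    then show "real s * real (card B) / real (length X) + g \<le> real i"
      using dev by linarith
  qed (use assms in \<open>auto simp: B_def\<close>)
  finally show ?thesis .
qed

section \<open>The sample quantiles u and v\<close>

locale quantile_sampling =
  fixes X :: "'a::linorder list" and n k s :: nat and g :: real
  assumes n_eq: "n = length X"
    and k: "1 \<le> k" "k \<le> n" and s: "0 < s" "s \<le> n" and g: "g > 0"
begin

lemma i_u_range: "1 \<le> nat (i_u n k s g)" "nat (i_u n k s g) \<le> s"
proof -
  have "real k * real s / real n \<le> real s"
    using k s by (simp add: divide_le_eq mult_right_mono)
  then have "\<lceil>real k * real s / real n - g\<rceil> \<le> int s"
    using g by (simp add: ceiling_le_iff)
  then show "1 \<le> nat (i_u n k s g)" "nat (i_u n k s g) \<le> s"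
    using s by (auto simp: i_u_def)
qed

lemma i_u_lower: "real k * real s / real n - g \<le> real (nat (i_u n k s g))"
proof -
  have "real (nat (i_u n k s g)) = real_of_int (i_u n k s g)"
    using i_u_range by simp
  moreover have "real_of_int \<lceil>real k * real s / real n - g\<rceil> \<le> real_of_int (i_u n k s g)"
    unfolding i_u_def by simp
  ultimately show ?thesis
    using le_of_int_ceiling[of "real k * real s / real n - g"] by linarith
qed

lemma i_v_range: "1 \<le> nat (i_v n k s g)" "nat (i_v n k s g) \<le> s"
proof -
  have "1 \<le> \<lceil>real k * real s / real n + g\<rceil>"
    using g by (simp add: le_ceiling_iff add_nonneg_pos)
  then have "1 \<le> i_v n k s g"
    using s unfolding i_v_def by linarith
  then show "1 \<le> nat (i_v n k s g)"
    by simp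
  show "nat (i_v n k s g) \<le> s"
    by (simp add: i_v_def)
qed

lemma i_v_upper: "real (nat (i_v n k s g)) - 1 < real k * real s / real n + g"
proof -
  have "real (nat (i_v n k s g)) = real_of_int (i_v n k s g)"
    using i_v_range by simp
  moreover have "real_of_int (i_v n k s g) \<le> real_of_int \<lceil>real k * real s / real n + g\<rceil>"
    unfolding i_v_def by simp
  ultimately show ?thesis
    using ceiling_correct[of "real k * real s / real n + g"] by linarith
qed

lemma k_l_range: "1 \<le> nat (k_l n k s g)" "nat (k_l n k s g) \<le> k"
proof -
  have "\<lceil>real k - 2 * g * real n / real s\<rceil> \<le> int k"
    using g by (simp add: ceiling_le_iff)
  then show "1 \<le> nat (k_l n k s g)" "nat (k_l n k s g) \<le> k"
    using k by (auto simp: k_l_def)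
qed

lemma k_r_range: "1 \<le> nat (k_r n k s g)" "nat (k_r n k s g) \<le> n"
proof -
  have "1 \<le> \<lceil>real k + 2 * g * real n / real s\<rceil>"
    using g k by (simp add: le_ceiling_iff add_pos_nonneg)
  then have "1 \<le> k_r n k s g"
    using k unfolding k_r_def by linarith
  then show "1 \<le> nat (k_r n k s g)"
    by simp
  show "nat (k_r n k s g) \<le> n"
    by (simp add: k_r_def)
qed

lemma prob_ostat_less_sample_i_u:
  assumes "i_u n k s g = \<lceil>real k * real s / real n - g\<rceil>"
  shows "measure_pmf.prob (sampling n s) {I. ostat X k < ostat (sample X I) (nat (i_u n k s g))}
           \<le> exp (- 2 * g\<^sup>2 / real s)"
  unfolding n_eq
proof (rule prob_ostat_less_ostat_sample)
  show "real (nat (i_u (length X) k s g)) - 1 \<le> real s * real k / real (length X) - g"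
    using assms i_u_range ceiling_correct[of "real k * real s / real n - g"]
    by (simp add: n_eq mult.commute)
qed (use k s g i_u_range n_eq in auto)

lemma prob_sample_i_u_less_ostat_k_l:
  "measure_pmf.prob (sampling n s) {I. ostat (sample X I) (nat (i_u n k s g)) < ostat X (nat (k_l n k s g))}
     \<le> exp (- 2 * g\<^sup>2 / real s)"
proof (cases "k_l n k s g = 1")
  case True
  have "measure_pmf.prob (sampling n s) {I. ostat (sample X I) (nat (i_u n k s g)) < ostat X 1}
      \<le> measure_pmf.prob (sampling n s) {}"
  proof (rule prob_sampling_mono[OF s(2)])
    fix I
    assume "I \<in> sample_space n s"
    then have "ostat X 1 \<le> ostat (sample X I) (nat (i_u n k s g))"
      using ostat_1_le ostat_sample_in_set i_u_range n_eq by metis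
    then show "I \<in> {I. ostat (sample X I) (nat (i_u n k s g)) < ostat X 1} \<Longrightarrow> I \<in> {}"
      by simp
  qed
  then show ?thesis
    using True order_trans[OF _ exp_ge_zero] by simp
next
  case False
  define d where "d = 2 * g * real n / real s"
  have "k_l n k s g = \<lceil>real k - d\<rceil>"
    using False unfolding k_l_def d_def by linarith
  then have "real (nat (k_l n k s g)) - 1 < real k - d"
    using k_l_range ceiling_correct[of "real k - d"] by simp
  then have "real s * (real (nat (k_l n k s g)) - 1) / real n \<le> real s * (real k - d) / real n"
    by (intro divide_right_mono mult_left_mono) auto
  also have "\<dots> = real k * real s / real n - 2 * g"
    unfolding d_def using k s by (simp add: field_simps)
  finally have "real s * (real (nat (k_l n k s g)) - 1) / real (length X) + g \<le> real (nat (i_u n k s g))"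
    using i_u_lower by (simp add: n_eq[symmetric])
  then show ?thesis
    unfolding n_eq using k_l_range k s g i_u_range n_eq
    by (intro prob_ostat_sample_less_ostat) auto
qed

lemma prob_sample_i_v_less_ostat:
  assumes "i_v n k s g = \<lceil>real k * real s / real n + g\<rceil>"
  shows "measure_pmf.prob (sampling n s) {I. ostat (sample X I) (nat (i_v n k s g)) < ostat X k}
           \<le> exp (- 2 * g\<^sup>2 / real s)"
  unfolding n_eq
proof (rule prob_ostat_sample_less_ostat)
  have "real s * (real k - 1) / real n \<le> real k * real s / real n"
    by (intro divide_right_mono) (auto simp: algebra_simps)
  moreover have "real k * real s / real n + g \<le> real (nat (i_v n k s g))"
    using assms real_nat_ceiling_ge[of "real k * real s / real n + g"] by simp
  ultimately show "real s * (real k - 1) / real (length X) + g \<le> real (nat (i_v (length X) k s g))"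
    by (simp add: n_eq)
qed (use k s g i_v_range n_eq in auto)

lemma prob_ostat_k_r_less_sample_i_v:
  "measure_pmf.prob (sampling n s) {I. ostat X (nat (k_r n k s g)) < ostat (sample X I) (nat (i_v n k s g))}
     \<le> exp (- 2 * g\<^sup>2 / real s)"
proof (cases "k_r n k s g = int n")
  case True
  have "measure_pmf.prob (sampling n s) {I. ostat X n < ostat (sample X I) (nat (i_v n k s g))}
      \<le> measure_pmf.prob (sampling n s) {}"
  proof (rule prob_sampling_mono[OF s(2)])
    fix I
    assume "I \<in> sample_space n s"
    then have "ostat (sample X I) (nat (i_v n k s g)) \<le> ostat X n"
      unfolding n_eq using le_ostat_length ostat_sample_in_set i_v_range n_eq by blast
    then show "I \<in> {I. ostat X n < ostat (sample X I) (nat (i_v n k s g))} \<Longrightarrow> I \<in> {}"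
      by simp
  qed
  then show ?thesis
    using True order_trans[OF _ exp_ge_zero] by simp
next
  case False
  define d where "d = 2 * g * real n / real s"
  have "k_r n k s g = \<lceil>real k + d\<rceil>"
    using False unfolding k_r_def d_def by linarith
  then have "real k + d \<le> real (nat (k_r n k s g))"
    using real_nat_ceiling_ge[of "real k + d"] by simp
  then have "real s * (real k + d) / real n \<le> real s * real (nat (k_r n k s g)) / real n"
    by (intro divide_right_mono mult_left_mono) auto
  moreover have "real s * (real k + d) / real n = real k * real s / real n + 2 * g"
    unfolding d_def using k s by (simp add: field_simps)
  ultimately have "real (nat (i_v n k s g)) - 1 \<le> real s * real (nat (k_r n k s g)) / real (length X) - g"
    using i_v_upper by (simp add: n_eq[symmetric])
  then show ?thesis
    unfolding n_eq using k_r_range k s g i_v_range n_eq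
    by (intro prob_ostat_less_ostat_sample) auto
qed

lemma i_u_neq_ceiling_iff:
  "i_u n k s g \<noteq> \<lceil>real k * real s / real n - g\<rceil> \<longleftrightarrow> real k \<le> g * real n / real s"
proof -
  have "i_u n k s g \<noteq> \<lceil>real k * real s / real n - g\<rceil> \<longleftrightarrow> \<lceil>real k * real s / real n - g\<rceil> \<le> 0"
    unfolding i_u_def by linarith
  also have "\<dots> \<longleftrightarrow> real k \<le> g * real n / real s"
    using k s by (simp add: ceiling_le_zero field_simps)
  finally show ?thesis .
qed

lemma i_v_neq_ceiling_iff:
  "i_v n k s g \<noteq> \<lceil>real k * real s / real n + g\<rceil> \<longleftrightarrow> real n < real k + g * real n / real s"
proof -
  have "i_v n k s g \<noteq> \<lceil>real k * real s / real n + g\<rceil> \<longleftrightarrow> int s < \<lceil>real k * real s / real n + g\<rceil>"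
    unfolding i_v_def by linarith
  also have "\<dots> \<longleftrightarrow> real n < real k + g * real n / real s"
    using k s by (simp add: less_ceiling_iff field_simps)
  finally show ?thesis .
qed

end

theorem lemma3p1:
  fixes X :: "'a::linorder list" and n k s :: nat and g :: real
  assumes "n = length X" and "n \<ge> 2"
    and "1 \<le> k" and "k \<le> n" and "1 \<le> s" and "s \<le> n - 1" and "g > 0"
  defines "P \<equiv> measure_pmf.prob (pmf_of_set (sample_space n s))"
  defines "u \<equiv> (\<lambda>I. ostat (sample X I) (nat (i_u n k s g)))"
  defines "v \<equiv> (\<lambda>I. ostat (sample X I) (nat (i_v n k s g)))"
  shows
   "(i_u n k s g = \<lceil>real k * real s / real n - g\<rceil> \<longrightarrow>
       P {I. ostat X k < u I} \<le> exp (- 2 * g\<^sup>2 / real s))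
  \<and> P {I. u I < ostat X (nat (k_l n k s g))} \<le> exp (- 2 * g\<^sup>2 / real s)
  \<and> (i_v n k s g = \<lceil>real k * real s / real n + g\<rceil> \<longrightarrow>
       P {I. v I < ostat X k} \<le> exp (- 2 * g\<^sup>2 / real s))
  \<and> P {I. ostat X (nat (k_r n k s g)) < v I} \<le> exp (- 2 * g\<^sup>2 / real s)
  \<and> (i_u n k s g \<noteq> \<lceil>real k * real s / real n - g\<rceil> \<longleftrightarrow> real k \<le> g * real n / real s)
  \<and> (i_v n k s g \<noteq> \<lceil>real k * real s / real n + g\<rceil> \<longleftrightarrow> real n < real k + g * real n / real s)"
proof -
  interpret quantile_sampling X n k s g
    \<comment> \<open>only s \<le> n is needed\<close>
    using assms by unfold_locales auto
  show ?thesis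
    unfolding P_def u_def v_def
    using prob_ostat_less_sample_i_u prob_sample_i_u_less_ostat_k_l
      prob_sample_i_v_less_ostat prob_ostat_k_r_less_sample_i_v
      i_u_neq_ceiling_iff i_v_neq_ceiling_iff
    by blast
qed

end
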